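(* Let $A$ be a circular $m\times n$ matrix and $b\in\mathbb{Z}_+^m$. Then $$Q^*(A,b)=\operatorname{conv}\Big(\bigcup_{\beta\in\mathbb{Z}_{\ge0}}Q_\beta(A,b)\Big),$$ where $Q_\beta(A,b)=\{x\in\mathbb{R}^n:Ax\ge b,\ x\ge0,\ \mathbf{1}^Tx=\beta\}$.
   Context: Notation: $[n]=\{1,\dots,n\}$ with addition mod $n$; for $a,c\in[n]$ with $t\ge0$ minimal such that $a+t\equiv c\pmod n$, $[a,c)_n=\{a,\dots,a+t-1\}$ (mod $n$). An $m\times n$ $\{0,1\}$-matrix $A$ is circular if for each row $i$ there are $\ell_i\in[n]$ and an integer $2\le k_i\le n-1$ such that row $i$ is the incidence vector of $[\ell_i,\ell_i+k_i)_n$. $Q(A,b)=\{x\in\mathbb{R}^n:Ax\ge b,x\ge0\}$, $Q^*(A,b)=\operatorname{conv}(Q(A,b)\cap\mathbb{Z}^n)$. *)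

theory Defs
  imports "HOL-Analysis.Analysis"
begin

text \<open>Columns of an m x n matrix are indexed by a finite type 'n; the cyclic
  order of the columns [n] is fixed by a bijection ord from 'n onto {0..<CARD('n)}
  (position of each column, 0-based).\<close>

definition cyc_interval :: "nat \<Rightarrow> nat \<Rightarrow> nat \<Rightarrow> nat set" where
  "cyc_interval n l k = {(l + t) mod n | t. t < k}"

definition circular :: "('n::finite \<Rightarrow> nat) \<Rightarrow> real^'n^'m \<Rightarrow> bool" where
  "circular ord A \<longleftrightarrow>
     (\<forall>i. \<exists>l k. l < CARD('n) \<and> 2 \<le> k \<and> k \<le> CARD('n) - 1 \<and>
        (\<forall>j. A $ i $ j = (if ord j \<in> cyc_interval CARD('n) l k then 1 else 0)))"

definition Qpoly :: "real^'n^'m \<Rightarrow> real^'m \<Rightarrow> (real^'n) set" where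
  "Qpoly A b = {x. (\<forall>i. (A *v x) $ i \<ge> b $ i) \<and> (\<forall>j. x $ j \<ge> 0)}"

definition Qint_hull :: "real^'n^'m \<Rightarrow> real^'m \<Rightarrow> (real^'n) set" where
  "Qint_hull A b = convex hull (Qpoly A b \<inter> {x. \<forall>j. x $ j \<in> \<int>})"

definition Qbeta :: "real \<Rightarrow> real^'n^'m \<Rightarrow> real^'m \<Rightarrow> (real^'n) set" where
  "Qbeta \<beta> A b = {x. (\<forall>i. (A *v x) $ i \<ge> b $ i) \<and> (\<forall>j. x $ j \<ge> 0) \<and>
                       (\<Sum>j\<in>UNIV. x $ j) = \<beta>}"

end

theory Submission
  imports Defs
begin

text \<open>Write \<open>S\<^sub>p\<close> for the sum of the first \<open>p\<close> entries of \<open>x\<close> in the cyclic column order.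
  A circular row constraint reads \<open>S\<^sub>l\<^sub>+\<^sub>k - S\<^sub>l \<ge> b\<close>, or \<open>\<beta> - S\<^sub>l + S\<^sub>l\<^sub>+\<^sub>k\<^sub>-\<^sub>n \<ge> b\<close> when the
  interval wraps around, so for integral \<open>b\<close> and \<open>\<beta>\<close> it survives replacing every \<open>S\<^sub>p\<close> by
  \<open>\<lfloor>S\<^sub>p\<rfloor> + h (frac S\<^sub>p)\<close> for any monotone \<open>h : [0,1) \<rightarrow> [0,1]\<close> with \<open>h 0 = 0\<close>.
  If \<open>t\<close> is the largest and \<open>t'\<close> the second largest value of \<open>frac S\<^sub>p\<close>, the two roundings
  sending \<open>t\<close> to \<open>t'\<close> resp. to \<open>1\<close> (and fixing everything else) give two points of
  \<open>Q\<^sub>\<beta>\<close> with fewer distinct fractional parts, and \<open>x\<close> lies on the segment between them.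
  Induction on the number of distinct nonzero fractional parts ends at integral points.\<close>

definition admissible_rounding :: "(real \<Rightarrow> real) \<Rightarrow> bool" where
  "admissible_rounding h \<longleftrightarrow> h 0 = 0 \<and> (\<forall>u v. 0 \<le> u \<longrightarrow> u \<le> v \<longrightarrow> v < 1 \<longrightarrow> h u \<le> h v)
     \<and> (\<forall>u. 0 \<le> u \<longrightarrow> u < 1 \<longrightarrow> 0 \<le> h u \<and> h u \<le> 1)"

definition round_frac :: "(real \<Rightarrow> real) \<Rightarrow> real \<Rightarrow> real" where
  "round_frac h s = of_int \<lfloor>s\<rfloor> + h (frac s)"

lemma round_frac_add_of_int: "round_frac h (s + of_int m) = round_frac h s + of_int m"
  unfolding round_frac_def frac_add_of_int_right by (simp flip: floor_add_int)

lemma round_frac_of_int: "admissible_rounding h \<Longrightarrow> round_frac h (of_int m) = of_int m"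
  using round_frac_add_of_int[of h 0 m] by (simp add: round_frac_def admissible_rounding_def)

lemma round_frac_mono:
  assumes "admissible_rounding h" "s \<le> s'"
  shows "round_frac h s \<le> round_frac h s'"
proof (cases "\<lfloor>s\<rfloor> = \<lfloor>s'\<rfloor>")
  case True
  then have "frac s \<le> frac s'" using assms(2) by (simp add: frac_def)
  then show ?thesis using assms(1) True unfolding round_frac_def admissible_rounding_def
    by (simp add: frac_lt_1)
next
  case False
  then have "real_of_int \<lfloor>s\<rfloor> + 1 \<le> of_int \<lfloor>s'\<rfloor>"
    using floor_mono[OF assms(2)] by linarith
  moreover have "h (frac s) \<le> 1" "0 \<le> h (frac s')"
    using assms(1) unfolding admissible_rounding_def by (auto simp: frac_lt_1)
  ultimately show ?thesis unfolding round_frac_def by linarith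
qed

lemma round_frac_shift_mono:
  assumes "admissible_rounding h" "s + of_int m \<le> s'"
  shows "round_frac h s + of_int m \<le> round_frac h s'"
  using round_frac_mono[OF assms] round_frac_add_of_int by simp

lemma frac_round_frac:
  assumes "admissible_rounding h"
  shows "frac (round_frac h s) = (if h (frac s) = 1 then 0 else h (frac s))"
proof -
  have h01: "0 \<le> h (frac s)" "h (frac s) \<le> 1"
    using assms unfolding admissible_rounding_def by (auto simp: frac_lt_1)
  show ?thesis
  proof (cases "h (frac s) = 1")
    case True
    then have "round_frac h s = of_int (\<lfloor>s\<rfloor> + 1)" unfolding round_frac_def by simp
    then show ?thesis using True by (simp only: frac_of_int) simp
  next
    case False
    then have "\<lfloor>round_frac h s\<rfloor> = \<lfloor>s\<rfloor>"
      unfolding round_frac_def using h01 by (intro floor_unique) auto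
    then show ?thesis
      using False by (simp only: frac_def[of "round_frac h s"]) (simp add: round_frac_def)
  qed
qed

definition prefix_sum :: "('n::finite \<Rightarrow> nat) \<Rightarrow> real^'n \<Rightarrow> nat \<Rightarrow> real" where
  "prefix_sum ord x p = (\<Sum>j\<in>{j. ord j < p}. x $ j)"

lemma prefix_sum_0 [simp]: "prefix_sum ord x 0 = 0"
  by (simp add: prefix_sum_def)

lemma prefix_sum_Suc:
  assumes "inj ord" "ord j = p"
  shows "prefix_sum ord x (Suc p) = prefix_sum ord x p + x $ j"
proof -
  have "{j'. ord j' < Suc p} = insert j {j'. ord j' < p}"
    using assms by (auto simp: less_Suc_eq inj_eq)
  then show ?thesis unfolding prefix_sum_def using assms(2) by simp
qed

lemma prefix_sum_CARD:
  assumes "bij_betw ord UNIV {0..<CARD('n)}"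
  shows "prefix_sum ord (x::real^'n::finite) CARD('n) = (\<Sum>j\<in>UNIV. x $ j)"
proof -
  have "{j. ord j < CARD('n)} = UNIV" using assms by (auto simp: bij_betw_def)
  then show ?thesis by (simp add: prefix_sum_def)
qed

lemma vec_nth_eq_prefix_sum_diff:
  assumes "inj ord"
  shows "x $ j = prefix_sum ord x (Suc (ord j)) - prefix_sum ord x (ord j)"
  using prefix_sum_Suc[OF assms refl, of x j] by simp

definition cyclic_interval_sum :: "nat \<Rightarrow> nat \<Rightarrow> nat \<Rightarrow> (nat \<Rightarrow> real) \<Rightarrow> real" where
  "cyclic_interval_sum n l k S =
     (if l + k \<le> n then S (l + k) - S l else S n - S l + S (l + k - n))"

lemma mem_cyc_interval_iff:
  assumes "q < n" "l < n" "k \<le> n"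
  shows "q \<in> cyc_interval n l k \<longleftrightarrow> (if l \<le> q then q < l + k else q + n < l + k)"
proof
  assume "q \<in> cyc_interval n l k"
  then obtain t where t: "t < k" "q = (l + t) mod n" by (auto simp: cyc_interval_def)
  show "if l \<le> q then q < l + k else q + n < l + k"
  proof (cases "l + t < n")
    case False
    then have "q = l + t - n" using t assms by (simp add: mod_if le_mod_geq)
    then show ?thesis using t assms False by auto
  qed (use t in auto)
next
  assume q: "if l \<le> q then q < l + k else q + n < l + k"
  show "q \<in> cyc_interval n l k"
  proof (cases "l \<le> q")
    case True
    then have "q = (l + (q - l)) mod n" "q - l < k" using q assms by auto
    then show ?thesis unfolding cyc_interval_def by blast
  next
    case False
    then have "q = (l + (q + n - l)) mod n" "q + n - l < k" using q assms by auto
    then show ?thesis unfolding cyc_interval_def by blast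
  qed
qed

lemma matrix_vector_mult_cyc_interval_row:
  fixes A :: "real^'n::finite^'m"
  assumes bij: "bij_betw ord UNIV {0..<CARD('n)}" and "l < CARD('n)" "k \<le> CARD('n)"
    and row: "\<forall>j. A $ i $ j = (if ord j \<in> cyc_interval CARD('n) l k then 1 else 0)"
  shows "(A *v x) $ i = cyclic_interval_sum CARD('n) l k (prefix_sum ord x)"
proof -
  let ?n = "CARD('n)"
  let ?J = "{j. if l \<le> ord j then ord j < l + k else ord j + ?n < l + k}"
  have ord_less: "ord j < ?n" for j using bij by (auto simp: bij_betw_def)
  have "(A *v x) $ i = (\<Sum>j\<in>UNIV. (if ord j \<in> cyc_interval ?n l k then 1 else 0) * x $ j)"
    using row by (simp add: matrix_vector_mult_def)
  also have "\<dots> = (\<Sum>j\<in>{j. ord j \<in> cyc_interval ?n l k}. x $ j)"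
    using sum.inter_filter[of UNIV "\<lambda>j. x $ j" "\<lambda>j. ord j \<in> cyc_interval ?n l k"]
    by (simp add: if_distrib[of "\<lambda>c. c * _"] cong: if_cong)
  also have "{j. ord j \<in> cyc_interval ?n l k} = ?J"
    using mem_cyc_interval_iff[OF ord_less assms(2,3)] by auto
  finally have Ax: "(A *v x) $ i = (\<Sum>j\<in>?J. x $ j)" .
  show ?thesis
  proof (cases "l + k \<le> ?n")
    case True
    then have "?J = {j. ord j < l + k} - {j. ord j < l}" by auto
    then show ?thesis
      using Ax True by (simp add: cyclic_interval_sum_def prefix_sum_def sum_diff subset_eq)
  next
    case False
    have "?J = (UNIV - {j. ord j < l}) \<union> {j. ord j < l + k - ?n}"
      using False ord_less by (auto simp: not_le; meson less_trans)
    moreover have "(UNIV - {j. ord j < l}) \<inter> {j. ord j < l + k - ?n} = {}"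
      using assms(3) by auto
    ultimately have "(A *v x) $ i = (\<Sum>j\<in>UNIV - {j. ord j < l}. x $ j) + prefix_sum ord x (l + k - ?n)"
      using Ax by (simp add: sum.union_disjoint prefix_sum_def)
    then show ?thesis using False prefix_sum_CARD[OF bij, of x]
      by (simp add: cyclic_interval_sum_def prefix_sum_def sum_diff)
  qed
qed

definition round_vec :: "('n::finite \<Rightarrow> nat) \<Rightarrow> (real \<Rightarrow> real) \<Rightarrow> real^'n \<Rightarrow> real^'n" where
  "round_vec ord h x = (\<chi> j. round_frac h (prefix_sum ord x (Suc (ord j)))
                            - round_frac h (prefix_sum ord x (ord j)))"

lemma prefix_sum_round_vec:
  assumes bij: "bij_betw ord UNIV {0..<CARD('n)}" and h: "admissible_rounding h"
  shows "p \<le> CARD('n) \<Longrightarrow>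
    prefix_sum ord (round_vec ord h (x::real^'n::finite)) p = round_frac h (prefix_sum ord x p)"
proof (induction p)
  case 0
  then show ?case using round_frac_of_int[OF h, of 0] by simp
next
  case (Suc p)
  then have "p \<in> ord ` UNIV" using bij by (auto simp: bij_betw_def)
  then obtain j where j: "ord j = p" by blast
  have "inj ord" using bij by (simp add: bij_betw_def)
  then show ?case using Suc prefix_sum_Suc[OF \<open>inj ord\<close> j] j by (simp add: round_vec_def)
qed

lemma sum_round_vec:
  assumes "bij_betw ord UNIV {0..<CARD('n)}" "admissible_rounding h" "(\<Sum>j\<in>UNIV. x $ j) \<in> \<int>"
  shows "(\<Sum>j\<in>UNIV. round_vec ord h (x::real^'n::finite) $ j) = (\<Sum>j\<in>UNIV. x $ j)"
  using assms prefix_sum_round_vec[OF assms(1,2), of "CARD('n)" x]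
  by (auto simp: prefix_sum_CARD round_frac_of_int elim!: Ints_cases)

lemma round_vec_nonneg:
  assumes "inj ord" "admissible_rounding h" "x $ j \<ge> 0"
  shows "round_vec ord h x $ j \<ge> 0"
  using round_frac_mono[OF assms(2)] prefix_sum_Suc[OF assms(1) refl, of x j] assms(3)
  by (simp add: round_vec_def)

lemma round_vec_cyc_interval_row_ge:
  fixes A :: "real^'n::finite^'m"
  assumes bij: "bij_betw ord UNIV {0..<CARD('n)}" and h: "admissible_rounding h"
    and "l < CARD('n)" "k \<le> CARD('n)"
    and row: "\<forall>j. A $ i $ j = (if ord j \<in> cyc_interval CARD('n) l k then 1 else 0)"
    and "c \<in> \<int>" "c \<le> (A *v x) $ i" and "(\<Sum>j\<in>UNIV. x $ j) \<in> \<int>"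
  shows "c \<le> (A *v round_vec ord h x) $ i"
proof -
  let ?n = "CARD('n)" and ?S = "prefix_sum ord x"
  obtain m where m: "c = of_int m" using \<open>c \<in> \<int>\<close> by (auto elim: Ints_cases)
  obtain z where z: "?S ?n = of_int z"
    using \<open>(\<Sum>j\<in>UNIV. x $ j) \<in> \<int>\<close> prefix_sum_CARD[OF bij] by (auto elim: Ints_cases)
  have prefix_sum_rounded[simp]: "p \<le> ?n \<Longrightarrow> prefix_sum ord (round_vec ord h x) p = round_frac h (?S p)" for p
    using prefix_sum_round_vec[OF bij h] by blast
  have row_sum: "(A *v y) $ i = cyclic_interval_sum ?n l k (prefix_sum ord y)" for y
    using matrix_vector_mult_cyc_interval_row[OF bij assms(3,4) row] .
  show ?thesis
  proof (cases "l + k \<le> ?n")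
    case True
    then have "?S l + of_int m \<le> ?S (l + k)"
      using assms(7) m row_sum[of x] by (simp add: cyclic_interval_sum_def)
    then have "round_frac h (?S l) + of_int m \<le> round_frac h (?S (l + k))"
      by (rule round_frac_shift_mono[OF h])
    then show ?thesis using True row_sum m assms(3) by (simp add: cyclic_interval_sum_def)
  next
    case False
    then have "?S l + of_int (m - z) \<le> ?S (l + k - ?n)"
      using assms(7) m z row_sum[of x] by (simp add: cyclic_interval_sum_def)
    then have "round_frac h (?S l) + of_int (m - z) \<le> round_frac h (?S (l + k - ?n))"
      by (rule round_frac_shift_mono[OF h])
    then show ?thesis using False row_sum m z assms(3,4) round_frac_of_int[OF h, of z]
      by (simp add: cyclic_interval_sum_def)
  qed
qed

lemma round_vec_in_Qbeta:
  fixes A :: "real^'n::finite^'m"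
  assumes bij: "bij_betw ord UNIV {0..<CARD('n)}" and "circular ord A"
    and "\<forall>i. b $ i \<in> \<int>" and h: "admissible_rounding h"
    and x: "x \<in> Qbeta (real \<beta>) A b"
  shows "round_vec ord h x \<in> Qbeta (real \<beta>) A b"
proof -
  have sum_x: "(\<Sum>j\<in>UNIV. x $ j) \<in> \<int>" using x by (simp add: Qbeta_def)
  have "b $ i \<le> (A *v round_vec ord h x) $ i" for i
  proof -
    obtain l k where row: "l < CARD('n)" "k \<le> CARD('n)"
      "\<forall>j. A $ i $ j = (if ord j \<in> cyc_interval CARD('n) l k then 1 else 0)"
      using \<open>circular ord A\<close> unfolding circular_def by (meson diff_le_self le_trans)
    show ?thesis
      using round_vec_cyc_interval_row_ge[OF bij h row, of "b $ i" x] assms(3) x sum_x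
      by (simp add: Qbeta_def)
  qed
  moreover have "0 \<le> round_vec ord h x $ j" for j
    using bij x round_vec_nonneg[OF _ h, of ord x j] by (simp add: Qbeta_def bij_betw_def)
  ultimately show ?thesis using x sum_round_vec[OF bij h sum_x] by (simp add: Qbeta_def)
qed

definition frac_prefix_sums :: "('n::finite \<Rightarrow> nat) \<Rightarrow> real^'n \<Rightarrow> real set" where
  "frac_prefix_sums ord x = (\<lambda>p. frac (prefix_sum ord x p)) ` {..CARD('n)}"

lemma frac_prefix_sums_round_vec:
  assumes "bij_betw ord UNIV {0..<CARD('n)}" "admissible_rounding h"
  shows "frac_prefix_sums ord (round_vec ord h (x::real^'n::finite)) =
    (\<lambda>u. if h u = 1 then 0 else h u) ` frac_prefix_sums ord x"
  unfolding frac_prefix_sums_def image_image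
  by (intro image_cong refl) (simp add: prefix_sum_round_vec[OF assms] frac_round_frac[OF assms(2)])

lemma vec_integral_if_frac_prefix_sums_zero:
  assumes bij: "bij_betw ord UNIV {0..<CARD('n)}" and "frac_prefix_sums ord x \<subseteq> {0}"
  shows "(x::real^'n::finite) $ j \<in> \<int>"
proof -
  have "prefix_sum ord x p \<in> \<int>" if "p \<le> CARD('n)" for p
    using assms(2) that by (auto simp: frac_prefix_sums_def frac_eq_0_iff)
  moreover have "ord j < CARD('n)" "inj ord" using bij by (auto simp: bij_betw_def)
  ultimately show ?thesis using vec_nth_eq_prefix_sum_diff[of ord x j] by simp
qed

lemma round_frac_convex_combination:
  assumes "0 \<le> t'" "t' < t" "t < 1" "frac s \<le> t' \<or> frac s = t"
  defines "\<theta> \<equiv> (1 - t) / (1 - t')"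
  shows "\<theta> * round_frac (\<lambda>u. if t' < u then t' else u) s
         + (1 - \<theta>) * round_frac (\<lambda>u. if t' < u then 1 else u) s = s"
proof (cases "frac s \<le> t'")
  case True
  then show ?thesis by (simp add: round_frac_def frac_def algebra_simps)
next
  case False
  have "\<theta> * (1 - t') = 1 - t" using assms(2,3) unfolding \<theta>_def by simp
  then have "\<theta> * t' + (1 - \<theta>) = frac s" using False assms(4) by (simp add: algebra_simps)
  moreover have "s = of_int \<lfloor>s\<rfloor> + frac s" by (simp add: frac_def)
  ultimately show ?thesis using False by (simp add: round_frac_def algebra_simps)
qed

lemma round_vec_split:
  fixes x :: "real^'n::finite"
  assumes bij: "bij_betw ord UNIV {0..<CARD('n)}" and "frac_prefix_sums ord x - {0} \<noteq> {}"
  obtains h1 h2 \<theta> where "admissible_rounding h1" "admissible_rounding h2" "0 \<le> \<theta>" "\<theta> \<le> 1"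
    "x = \<theta> *\<^sub>R round_vec ord h1 x + (1 - \<theta>) *\<^sub>R round_vec ord h2 x"
    "card (frac_prefix_sums ord (round_vec ord h1 x) - {0}) < card (frac_prefix_sums ord x - {0})"
    "card (frac_prefix_sums ord (round_vec ord h2 x) - {0}) < card (frac_prefix_sums ord x - {0})"
proof -
  let ?F = "frac_prefix_sums ord x"
  have fin: "finite ?F" by (simp add: frac_prefix_sums_def)
  have F01: "u \<in> ?F \<Longrightarrow> 0 \<le> u \<and> u < 1" for u by (auto simp: frac_prefix_sums_def frac_lt_1)
  have "0 \<in> ?F" unfolding frac_prefix_sums_def by (rule image_eqI[of _ _ 0]) auto
  define t where "t = Max (?F - {0})"
  have t: "t \<in> ?F - {0}" "\<And>u. u \<in> ?F - {0} \<Longrightarrow> u \<le> t"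
    using fin assms(2) Max_in[of "?F - {0}"] unfolding t_def by auto
  define t' where "t' = Max (?F - {t})"
  have "?F - {t} \<noteq> {}" using \<open>0 \<in> ?F\<close> t(1) by blast
  then have t': "t' \<in> ?F - {t}" "\<And>u. u \<in> ?F - {t} \<Longrightarrow> u \<le> t'"
    using fin Max_in[of "?F - {t}"] unfolding t'_def by auto
  have "0 \<le> t'" "t < 1" using F01 t(1) t'(1) by auto
  have "t' < t"
  proof (cases "t' = 0")
    case True
    then show ?thesis using F01 t(1) by force
  next
    case False
    then show ?thesis using t(2)[of t'] t'(1) by auto
  qed
  have F_cases: "u \<in> ?F \<Longrightarrow> u \<le> t' \<or> u = t" for u using t'(2) by blast
  define h1 where "h1 = (\<lambda>u::real. if t' < u then t' else u)"
  define h2 where "h2 = (\<lambda>u::real. if t' < u then 1 else u)"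
  have h: "admissible_rounding h1" "admissible_rounding h2"
    using \<open>0 \<le> t'\<close> \<open>t' < t\<close> \<open>t < 1\<close> by (auto simp: admissible_rounding_def h1_def h2_def)
  define \<theta> where "\<theta> = (1 - t) / (1 - t')"
  have "0 \<le> \<theta>" "\<theta> \<le> 1" using \<open>0 \<le> t'\<close> \<open>t' < t\<close> \<open>t < 1\<close> by (auto simp: \<theta>_def field_simps)
  have comb: "\<theta> * round_frac h1 (prefix_sum ord x p) + (1 - \<theta>) * round_frac h2 (prefix_sum ord x p)
      = prefix_sum ord x p" if "p \<le> CARD('n)" for p
    unfolding h1_def h2_def \<theta>_def using \<open>0 \<le> t'\<close> \<open>t' < t\<close> \<open>t < 1\<close> F_cases that
    by (intro round_frac_convex_combination) (auto simp: frac_prefix_sums_def)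
  have "ord j < CARD('n)" "inj ord" for j using bij by (auto simp: bij_betw_def)
  then have x: "x = \<theta> *\<^sub>R round_vec ord h1 x + (1 - \<theta>) *\<^sub>R round_vec ord h2 x"
    using comb vec_nth_eq_prefix_sum_diff[of ord x]
    by (simp add: vec_eq_iff round_vec_def algebra_simps Suc_leI less_imp_le)
  have fewer: "card (frac_prefix_sums ord (round_vec ord h x) - {0}) < card (?F - {0})"
    if "admissible_rounding h" and "\<And>u. u \<in> ?F \<Longrightarrow> h u = 1 \<or> h u \<in> ?F - {t}" for h
  proof -
    have "frac_prefix_sums ord (round_vec ord h x) - {0} \<subseteq> ?F - {0} - {t}"
      using that(2) \<open>0 \<in> ?F\<close> t by (auto simp: frac_prefix_sums_round_vec[OF bij that(1)])
    then show ?thesis using fin t(1) by (meson card_Diff1_less card_mono finite_Diff order_le_less_trans)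
  qed
  have "h1 u = 1 \<or> h1 u \<in> ?F - {t}" "h2 u = 1 \<or> h2 u \<in> ?F - {t}" if "u \<in> ?F" for u
    using F_cases[OF that] t'(1) \<open>t' < t\<close> that by (auto simp: h1_def h2_def)
  then show ?thesis using that h \<open>0 \<le> \<theta>\<close> \<open>\<theta> \<le> 1\<close> x fewer by blast
qed

lemma Qbeta_subset_Qint_hull:
  fixes A :: "real^'n::finite^'m"
  assumes bij: "bij_betw ord UNIV {0..<CARD('n)}" and "circular ord A" and "\<forall>i. b $ i \<in> \<int>"
  shows "Qbeta (real \<beta>) A b \<subseteq> Qint_hull A b"
proof
  fix x
  assume "x \<in> Qbeta (real \<beta>) A b"
  then show "x \<in> Qint_hull A b"
  proof (induction "card (frac_prefix_sums ord x - {0})" arbitrary: x rule: less_induct)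
    case less
    show ?case
    proof (cases "frac_prefix_sums ord x - {0} = {}")
      case True
      then have "x \<in> Qpoly A b \<inter> {x. \<forall>j. x $ j \<in> \<int>}"
        using less.prems vec_integral_if_frac_prefix_sums_zero[OF bij]
        by (auto simp: Qbeta_def Qpoly_def)
      then show ?thesis unfolding Qint_hull_def by (rule hull_inc)
    next
      case False
      then obtain h1 h2 \<theta> where split: "admissible_rounding h1" "admissible_rounding h2"
        "0 \<le> \<theta>" "\<theta> \<le> 1" "x = \<theta> *\<^sub>R round_vec ord h1 x + (1 - \<theta>) *\<^sub>R round_vec ord h2 x"
        "card (frac_prefix_sums ord (round_vec ord h1 x) - {0}) < card (frac_prefix_sums ord x - {0})"
        "card (frac_prefix_sums ord (round_vec ord h2 x) - {0}) < card (frac_prefix_sums ord x - {0})"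
        using round_vec_split[OF bij] by blast
      have "round_vec ord h1 x \<in> Qint_hull A b" "round_vec ord h2 x \<in> Qint_hull A b"
        using less.hyps split round_vec_in_Qbeta[OF assms _ less.prems] by blast+
      then have "\<theta> *\<^sub>R round_vec ord h1 x + (1 - \<theta>) *\<^sub>R round_vec ord h2 x \<in> Qint_hull A b"
        unfolding Qint_hull_def using split(3,4) by (intro convexD) auto
      with split(5) show ?thesis by simp
    qed
  qed
qed

theorem corollary3p2:
  fixes A :: "real^'n^'m" and b :: "real^'m" and ord :: "'n \<Rightarrow> nat"
  assumes "bij_betw ord UNIV {0..<CARD('n)}"
    and "circular ord A"
    and "\<forall>i. b $ i \<in> \<int> \<and> b $ i \<ge> 0"
  shows "Qint_hull A b = convex hull (\<Union>\<beta>::nat. Qbeta (real \<beta>) A b)"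
proof
  have "Qpoly A b \<inter> {x. \<forall>j. x $ j \<in> \<int>} \<subseteq> (\<Union>\<beta>::nat. Qbeta (real \<beta>) A b)"
  proof
    fix x assume x: "x \<in> Qpoly A b \<inter> {x. \<forall>j. x $ j \<in> \<int>}"
    then have "(\<Sum>j\<in>UNIV. x $ j) \<in> \<int>" "0 \<le> (\<Sum>j\<in>UNIV. x $ j)"
      by (auto simp: Qpoly_def intro: Ints_sum sum_nonneg)
    then obtain \<beta> :: nat where "(\<Sum>j\<in>UNIV. x $ j) = real \<beta>"
      by (metis Ints_cases of_nat_nat zero_le_imp_eq_int of_int_of_nat_eq of_int_le_iff of_int_0)
    then show "x \<in> (\<Union>\<beta>::nat. Qbeta (real \<beta>) A b)" using x by (auto simp: Qbeta_def Qpoly_def)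
  qed
  then show "Qint_hull A b \<subseteq> convex hull (\<Union>\<beta>::nat. Qbeta (real \<beta>) A b)"
    unfolding Qint_hull_def by (rule hull_mono)
  show "convex hull (\<Union>\<beta>::nat. Qbeta (real \<beta>) A b) \<subseteq> Qint_hull A b"
    using Qbeta_subset_Qint_hull[OF assms(1,2)] assms(3)
    by (intro hull_minimal) (auto simp: Qint_hull_def)
qed

end
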